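(* Let $E$ be a real Hilbert space, $C\subseteq E$ nonempty closed convex, $\rho=\sup_{x,y\in C}\lVert x-y\rVert\in[0,+\infty]$, $a\in C$, $0<\theta_1\leqslant\dots\leqslant\theta_T$, and $\widehat{x}_t^*\in E$ arbitrary predictions. Suppose the learner plays $\widetilde{x}_1=a$, $\widetilde{x}_t=P_C\big(\widetilde{x}_{t-1}-\theta_{t-1}x_{t-1}^*\big)$ for $t\geqslant2$, and $x_t=P_C\big(\widetilde{x}_t-\theta_t\widehat{x}_t^*\big)$. Then for all $z\in C$, \[\mathrm{Regret}(z,\dots,z)\leqslant\frac1{2\theta_1}\lVert z-a\rVert^2+\sum_{t=1}^T\frac1{\theta_t}Q_\rho^\star\big(\theta_t\lVert x_t^*-\widehat{x}_t^*\rVert\big)-\sum_{t=1}^T\frac1{2\theta_t}\lVert x_t-\widetilde{x}_t\rVert^2,\] and also \[\mathrm{Regret}(z,\dots,z)\leqslant\frac1{2\theta_1}\lVert z-a\rVert^2+\sum_{t=1}^T\frac1{\theta_t}\Phi_{\theta_t}(x_t^*,\widehat{x}_t^* )-\sum_{t=1}^T\frac1{2\theta_t}\lVert y_t-\widetilde{x}_t\rVert^2,\] where $y_t=P_C\big(\widetilde{x}_t-\theta_t\widehat{y}_t^*\big)$.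
   Context: $P_C$ is the metric projection onto $C$. Protocol: at rounds $t=1,\dots,T$ the learner plays $x_t\in C$, the adversary reveals a proper $\varphi_t\colon E\to(-\infty,+\infty]$ with $C\subseteq\operatorname{dom}\partial\varphi_t$, and $x_t^*\in\partial\varphi_t(x_t)$ ($E$ identified with its dual). $\mathrm{Regret}(z,\dots,z)=\sum_t\varphi_t(x_t)-\sum_t\varphi_t(z)$. $Q_\rho^\star(\varkappa)=\frac12\varkappa^2-\frac12(\lvert\varkappa\rvert-\rho)_+^2$ (with $Q_\infty^\star(\varkappa)=\frac12\varkappa^2$), $x_+=\max\{x,0\}$. $\widehat{y}_t^*=\lambda\widehat{x}_t^*+(1-\lambda)x_t^*$, $\lambda=\min\{\lVert x_t^*\rVert/\lVert x_t^*-\widehat{x}_t^*\rVert,1\}$ (any $\lambda$ if $x_t^*=\widehat{x}_t^*$). For $\xi>0$: $\Phi_\xi(x^*,\widehat{x}^* )=Q_\rho^\star\big(\xi\min\{\lVert x^*-\widehat{x}^*\rVert,\lVert x^*\rVert\}\big)+\xi\lVert x^*\rVert\min\{\xi(\lVert x^*-\widehat{x}^*\rVert-\lVert x^*\rVert)_+,\rho\}$. *)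

theory Defs
  imports "HOL-Analysis.Analysis" "HOL-Library.Extended_Real"
begin

text \<open>Metric projection onto C (well defined for nonempty closed convex C in a
  real Hilbert space: the nearest point exists and is unique).\<close>
definition metric_proj :: "'a::real_inner set \<Rightarrow> 'a \<Rightarrow> 'a" where
  "metric_proj C x = (THE p. p \<in> C \<and> (\<forall>y\<in>C. dist x p \<le> dist x y))"

definition proper_fun :: "('a \<Rightarrow> ereal) \<Rightarrow> bool" where
  "proper_fun f \<longleftrightarrow> (\<forall>x. f x \<noteq> -\<infinity>) \<and> (\<exists>x. f x \<noteq> \<infinity>)"

definition subdiff :: "('a::real_inner \<Rightarrow> ereal) \<Rightarrow> 'a \<Rightarrow> 'a set" where
  "subdiff f x = {s. \<bar>f x\<bar> \<noteq> \<infinity> \<and>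
      (\<forall>y. f y \<ge> f x + ereal (inner s (y - x)))}"

definition dom_subdiff :: "('a::real_inner \<Rightarrow> ereal) \<Rightarrow> 'a set" where
  "dom_subdiff f = {x. subdiff f x \<noteq> {}}"

definition diam_e :: "'a::metric_space set \<Rightarrow> ereal" where
  "diam_e C = (SUP p\<in>C \<times> C. ereal (dist (fst p) (snd p)))"

definition pos_part :: "real \<Rightarrow> real" where
  "pos_part x = max x 0"

definition Qstar :: "ereal \<Rightarrow> real \<Rightarrow> real" where
  "Qstar \<rho> k = (if \<rho> = \<infinity> then k\<^sup>2 / 2
                 else k\<^sup>2 / 2 - (pos_part (\<bar>k\<bar> - real_of_ereal \<rho>))\<^sup>2 / 2)"

definition min_e :: "real \<Rightarrow> ereal \<Rightarrow> real" where
  "min_e r \<rho> = (if \<rho> = \<infinity> then r else min r (real_of_ereal \<rho>))"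

definition Phi :: "ereal \<Rightarrow> real \<Rightarrow> 'a::real_normed_vector \<Rightarrow> 'a \<Rightarrow> real" where
  "Phi \<rho> \<xi> xs xh =
     Qstar \<rho> (\<xi> * min (norm (xs - xh)) (norm xs))
     + \<xi> * norm xs * min_e (\<xi> * pos_part (norm (xs - xh) - norm xs)) \<rho>"

text \<open>hat y^* = lambda hat x^* + (1-lambda) x^*, lambda = min{|x^*|/|x^*-hat x^*|, 1};
  when x^* = hat x^* any lambda gives hat y^* = x^* (here division by 0 gives lambda = 0).\<close>
definition yhat :: "'a::real_normed_vector \<Rightarrow> 'a \<Rightarrow> 'a" where
  "yhat xs xh = (let l = min (norm xs / norm (xs - xh)) 1 in
                  l *\<^sub>R xh + (1 - l) *\<^sub>R xs)"

end

theory Submission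
  imports Defs
begin

(* Let u' = P_C(xt_t - theta_t xs_t), which
   is xt_(t+1). The variational inequality of P_C, used at u' and at x_t, bounds
   theta_t <xs_t, x_t - z> by (|xt_t - z|^2 - |u' - z|^2 - |x_t - xt_t|^2)/2 plus the mismatch
   theta_t <xs_t - xh_t, x_t - u'> - |x_t - u'|^2/2; as |x_t - u'| <= rho, the Fenchel-Young
   inequality for Q_rho^star bounds the mismatch by Q_rho^star(theta_t |xs_t - xh_t|). The second
   bound runs the same argument with the prediction yhat_t and pays for <xs_t, x_t - y_t> by
   nonexpansiveness of P_C. After division by theta_t the distance terms telescope since theta is
   nondecreasing, and the subgradient inequality bounds the regret by the linearised sum.
   Completeness of E only serves the existence of P_C: minimising sequences are Cauchy by
   Apollonius' identity. *)

lemma parallelogram_law: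
  fixes a b :: "'a::real_inner"
  shows "norm (a + b)^2 + norm (a - b)^2 = 2 * norm a^2 + 2 * norm b^2"
  by (simp add: power2_norm_eq_inner inner_add_left inner_add_right inner_diff_left
      inner_diff_right inner_commute)

lemma apollonius:
  fixes y p q :: "'a::real_inner"
  shows "norm (p - q)^2 = 2 * norm (y - p)^2 + 2 * norm (y - q)^2 - 4 * norm (y - midpoint p q)^2"
proof -
  have "(y - p) + (y - q) = 2 *\<^sub>R (y - midpoint p q)"
    by (simp add: midpoint_def algebra_simps scaleR_2)
  moreover have "(y - p) - (y - q) = q - p" by simp
  ultimately show ?thesis
    using parallelogram_law[of "y - p" "y - q"] by (simp add: norm_minus_commute power_mult_distrib)
qed

lemma midpoint_in_convex:
  assumes "convex C" "p \<in> C" "q \<in> C"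
  shows "midpoint p q \<in> C"
  by (meson assms convex_contains_segment midpoint_in_closed_segment subsetD)

lemma minimizing_sequence_Cauchy:
  fixes C :: "'a::real_inner set"
  assumes "convex C" "\<And>n. c n \<in> C" "(\<lambda>n. dist y (c n)) \<longlonglongrightarrow> infdist y C"
  shows "Cauchy c"
proof (rule metric_CauchyI)
  fix e :: real
  assume "0 < e"
  define d where "d = infdist y C"
  have "(\<lambda>n. dist y (c n)^2) \<longlonglongrightarrow> d^2"
    using assms(3) unfolding d_def by (intro tendsto_intros)
  hence "\<forall>\<^sub>F n in sequentially. dist y (c n)^2 < d^2 + e^2 / 4"
    by (rule order_tendstoD(2)) (use \<open>0 < e\<close> in auto)
  then obtain N where N: "\<And>n. n \<ge> N \<Longrightarrow> dist y (c n)^2 < d^2 + e^2 / 4"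
    unfolding eventually_sequentially by blast
  have "dist (c m) (c n) < e" if "m \<ge> N" "n \<ge> N" for m n
  proof -
    have "midpoint (c m) (c n) \<in> C" by (rule midpoint_in_convex[OF assms(1,2,2)])
    hence "d \<le> norm (y - midpoint (c m) (c n))"
      unfolding d_def by (metis dist_norm infdist_le)
    hence "d^2 \<le> norm (y - midpoint (c m) (c n))^2"
      by (intro power_mono) (simp_all add: d_def infdist_nonneg)
    hence "norm (c m - c n)^2 < e^2"
      using apollonius[of "c m" "c n" y] N[OF that(1)] N[OF that(2)] by (simp add: dist_norm)
    thus ?thesis using \<open>0 < e\<close> by (simp add: dist_norm power2_less_imp_less)
  qed
  thus "\<exists>M. \<forall>m\<ge>M. \<forall>n\<ge>M. dist (c m) (c n) < e" by blast
qed

lemma nearest_point_exists: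
  fixes C :: "'a::{real_inner,complete_space} set"
  assumes "C \<noteq> {}" "closed C" "convex C"
  obtains p where "p \<in> C" "\<And>w. w \<in> C \<Longrightarrow> dist y p \<le> dist y w"
proof -
  define d where "d = infdist y C"
  have "\<exists>c\<in>C. dist y c < d + inverse (Suc n)" for n
  proof -
    have "bdd_below ((\<lambda>c. dist y c) ` C)" by (rule bdd_belowI[of _ 0]) auto
    moreover have "(INF c\<in>C. dist y c) < d + inverse (Suc n)"
      using assms(1) by (simp add: d_def infdist_notempty)
    ultimately show ?thesis by (simp add: cINF_less_iff[OF assms(1)])
  qed
  then obtain c where c: "\<And>n. c n \<in> C" "\<And>n. dist y (c n) < d + inverse (Suc n)"
    using choice[of "\<lambda>n c. c \<in> C \<and> dist y c < d + inverse (Suc n)"] by blast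
  have "(\<lambda>n. dist y (c n)) \<longlonglongrightarrow> d"
  proof (rule tendsto_sandwich[OF _ _ tendsto_const])
    show "(\<lambda>n. d + inverse (real (Suc n))) \<longlonglongrightarrow> d"
      using tendsto_add[OF tendsto_const LIMSEQ_inverse_real_of_nat] by simp
    show "\<forall>\<^sub>F n in sequentially. d \<le> dist y (c n)"
      using c(1) by (simp add: d_def infdist_le)
    show "\<forall>\<^sub>F n in sequentially. dist y (c n) \<le> d + inverse (Suc n)"
      using c(2) by (simp add: less_imp_le)
  qed
  then have "Cauchy c"
    using minimizing_sequence_Cauchy[OF assms(3), of c y] c(1) unfolding d_def by blast
  then obtain p where p: "c \<longlonglongrightarrow> p" by (auto simp: Cauchy_convergent_iff convergent_def)
  have "dist y p = d"
    using tendsto_dist[OF tendsto_const p] \<open>(\<lambda>n. dist y (c n)) \<longlonglongrightarrow> d\<close>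
    by (rule LIMSEQ_unique)
  show ?thesis
  proof (rule that)
    show "p \<in> C" using closed_sequentially[OF assms(2) c(1) p] .
    show "dist y p \<le> dist y w" if "w \<in> C" for w
      using \<open>dist y p = d\<close> infdist_le[OF that, of y] unfolding d_def by simp
  qed
qed

lemma
  fixes C :: "'a::{real_inner,complete_space} set"
  assumes "C \<noteq> {}" "closed C" "convex C"
  shows metric_proj_in: "metric_proj C y \<in> C"
    and metric_proj_le: "w \<in> C \<Longrightarrow> dist y (metric_proj C y) \<le> dist y w"
proof -
  obtain p where p: "p \<in> C" "\<And>w. w \<in> C \<Longrightarrow> dist y p \<le> dist y w"
    by (rule nearest_point_exists[OF assms, of y]) auto
  have "metric_proj C y = p"
    unfolding metric_proj_def
  proof (rule the_equality)
    show "p \<in> C \<and> (\<forall>w\<in>C. dist y p \<le> dist y w)" using p by blast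
    show "q = p" if "q \<in> C \<and> (\<forall>w\<in>C. dist y q \<le> dist y w)" for q
      by (rule any_closest_point_unique[OF assms(3,2), of q p y]) (use that p in auto)
  qed
  with p show "metric_proj C y \<in> C" "w \<in> C \<Longrightarrow> dist y (metric_proj C y) \<le> dist y w"
    by auto
qed

lemma metric_proj_inner_le:
  fixes C :: "'a::{real_inner,complete_space} set"
  assumes "C \<noteq> {}" "closed C" "convex C" "w \<in> C"
  shows "inner (y - metric_proj C y) (w - metric_proj C y) \<le> 0"
  by (rule any_closest_point_dot[OF assms(3,2) metric_proj_in[OF assms(1-3)] assms(4)])
    (simp add: metric_proj_le[OF assms(1-3)])

lemma metric_proj_nonexpansive:
  fixes C :: "'a::{real_inner,complete_space} set"
  assumes "C \<noteq> {}" "closed C" "convex C"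
  shows "dist (metric_proj C x) (metric_proj C y) \<le> dist x y"
proof -
  let ?p = "metric_proj C x" and ?q = "metric_proj C y"
  have "inner (x - ?p) (?q - ?p) \<le> 0" "inner (y - ?q) (?p - ?q) \<le> 0"
    by (simp_all add: metric_proj_inner_le[OF assms] metric_proj_in[OF assms])
  then show ?thesis
    unfolding dist_norm norm_le using inner_ge_zero[of "(x - ?p) - (y - ?q)"]
    by (simp add: inner_add inner_diff inner_commute)
qed

lemma inner_diff_three_points:
  fixes a b c :: "'a::real_inner"
  shows "inner (a - b) (b - c) = (norm (a - c)^2 - norm (b - c)^2 - norm (a - b)^2) / 2"
  unfolding power2_norm_eq_inner
  by (simp add: inner_diff_left inner_diff_right inner_commute algebra_simps)

lemma metric_proj_step:
  fixes C :: "'a::{real_inner,complete_space} set" and u g :: 'a and \<theta> :: real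
  assumes "C \<noteq> {}" "closed C" "convex C" "w \<in> C"
  defines "p \<equiv> metric_proj C (u - \<theta> *\<^sub>R g)"
  shows "\<theta> * inner g (p - w) \<le> (norm (u - w)^2 - norm (p - w)^2 - norm (u - p)^2) / 2"
proof -
  have "inner ((u - \<theta> *\<^sub>R g) - p) (w - p) \<le> 0"
    unfolding p_def by (rule metric_proj_inner_le[OF assms(1-4)])
  hence "\<theta> * inner g (p - w) \<le> inner (u - p) (p - w)"
    by (simp add: inner_diff_left inner_diff_right algebra_simps)
  thus ?thesis by (simp add: inner_diff_three_points)
qed

lemma dist_le_diam_e:
  assumes "p \<in> C" "q \<in> C"
  shows "ereal (dist p q) \<le> diam_e C"
  unfolding diam_e_def
  using SUP_upper[of "(p, q)" "C \<times> C" "\<lambda>x. ereal (dist (fst x) (snd x))"] assms by simp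

(* Qstar rho is the convex conjugate of d \<mapsto> d^2/2 restricted to [0, rho],
   so this is the Fenchel-Young inequality. *)
lemma Qstar_ge:
  assumes "0 \<le> k" "0 \<le> d" "ereal d \<le> \<rho>"
  shows "k * d - d^2 / 2 \<le> Qstar \<rho> k"
proof (cases \<rho>)
  case (real r)
  with assms(3) have "d \<le> r" by simp
  show ?thesis
  proof (cases "k \<le> r")
    case True
    have "0 \<le> (k - d)^2" by simp
    thus ?thesis using True real assms(1)
      by (simp add: Qstar_def pos_part_def power2_eq_square algebra_simps)
  next
    case False
    have "0 \<le> (r - d) * (k - (r + d) / 2)"
      using False \<open>d \<le> r\<close> by (intro mult_nonneg_nonneg) auto
    moreover have "(r - d) * (k - (r + d) / 2) = (k * r - r^2 / 2) - (k * d - d^2 / 2)"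
      by (simp add: power2_eq_square field_simps)
    moreover have "Qstar \<rho> k = k * r - r^2 / 2"
      using False real assms(1) by (simp add: Qstar_def pos_part_def power2_eq_square field_simps)
    ultimately show ?thesis by linarith
  qed
next
  case PInf
  have "0 \<le> (k - d)^2" by simp
  thus ?thesis using PInf by (simp add: Qstar_def power2_eq_square algebra_simps)
qed (use assms in simp)

lemma min_e_ge:
  assumes "d \<le> r" "ereal d \<le> \<rho>"
  shows "d \<le> min_e r \<rho>"
  using assms by (cases \<rho>) (auto simp: min_e_def)

lemma
  fixes g h :: "'a::real_normed_vector"
  shows norm_diff_yhat_left: "norm (g - yhat g h) = min (norm (g - h)) (norm g)"
    and norm_diff_yhat_right: "norm (h - yhat g h) = pos_part (norm (g - h) - norm g)"
proof -
  define l where "l = min (norm g / norm (g - h)) 1"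
  have l: "0 \<le> l" "l \<le> 1" by (auto simp: l_def)
  have "g - yhat g h = l *\<^sub>R (g - h)" "h - yhat g h = (1 - l) *\<^sub>R (h - g)"
    by (simp_all add: yhat_def l_def[symmetric] Let_def algebra_simps)
  hence norms: "norm (g - yhat g h) = l * norm (g - h)"
    "norm (h - yhat g h) = (1 - l) * norm (g - h)"
    using l by (simp_all add: norm_minus_commute)
  show "norm (g - yhat g h) = min (norm (g - h)) (norm g)"
    unfolding norms by (cases "g = h") (auto simp: l_def min_def field_simps)
  show "norm (h - yhat g h) = pos_part (norm (g - h) - norm g)"
    unfolding norms by (cases "g = h") (auto simp: l_def pos_part_def min_def max_def field_simps)
qed

lemma optimistic_step_Qstar:
  fixes C :: "'a::{real_inner,complete_space} set" and u z g h :: 'a and \<theta> :: real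
  assumes C: "C \<noteq> {}" "closed C" "convex C" and "z \<in> C" "0 < \<theta>"
  defines "x \<equiv> metric_proj C (u - \<theta> *\<^sub>R h)"
    and "u' \<equiv> metric_proj C (u - \<theta> *\<^sub>R g)"
  shows "inner g (x - z) \<le> (norm (u - z)^2 - norm (u' - z)^2) / (2 * \<theta>)
           + Qstar (diam_e C) (\<theta> * norm (g - h)) / \<theta> - norm (x - u)^2 / (2 * \<theta>)"
proof -
  have "x \<in> C" "u' \<in> C" using metric_proj_in[OF C] by (simp_all add: x_def u'_def)
  have step_g: "\<theta> * inner g (u' - z) \<le> (norm (u - z)^2 - norm (u' - z)^2 - norm (u - u')^2) / 2"
    unfolding u'_def by (rule metric_proj_step[OF C \<open>z \<in> C\<close>])
  have step_h: "\<theta> * inner h (x - u') \<le> (norm (u - u')^2 - norm (x - u')^2 - norm (u - x)^2) / 2"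
    unfolding x_def by (rule metric_proj_step[OF C \<open>u' \<in> C\<close>])
  have "\<theta> * inner (g - h) (x - u') \<le> \<theta> * norm (g - h) * norm (x - u')"
    using norm_cauchy_schwarz[of "g - h" "x - u'"] \<open>0 < \<theta>\<close> by (simp add: mult.assoc)
  also have "\<dots> \<le> Qstar (diam_e C) (\<theta> * norm (g - h)) + norm (x - u')^2 / 2"
    using Qstar_ge[of "\<theta> * norm (g - h)" "norm (x - u')" "diam_e C"]
      dist_le_diam_e[OF \<open>x \<in> C\<close> \<open>u' \<in> C\<close>] \<open>0 < \<theta>\<close>
    by (simp add: dist_norm)
  finally have gap: "\<theta> * inner (g - h) (x - u')
      \<le> Qstar (diam_e C) (\<theta> * norm (g - h)) + norm (x - u')^2 / 2" .
  have "norm (x - u)^2 = norm (u - x)^2" by (simp add: norm_minus_commute)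
  have "\<theta> * inner g (x - z)
      = \<theta> * inner g (u' - z) + \<theta> * inner (g - h) (x - u') + \<theta> * inner h (x - u')"
    by (simp add: inner_diff_left inner_diff_right algebra_simps)
  also have "\<dots> \<le> (norm (u - z)^2 - norm (u' - z)^2) / 2
      + Qstar (diam_e C) (\<theta> * norm (g - h)) - norm (x - u)^2 / 2" (is "_ \<le> ?R")
    using step_g step_h gap \<open>norm (x - u)^2 = norm (u - x)^2\<close> by argo
  finally have "inner g (x - z) \<le> ?R / \<theta>"
    using \<open>0 < \<theta>\<close> by (simp add: pos_le_divide_eq mult.commute)
  also have "?R / \<theta> = (norm (u - z)^2 - norm (u' - z)^2) / (2 * \<theta>)
      + Qstar (diam_e C) (\<theta> * norm (g - h)) / \<theta> - norm (x - u)^2 / (2 * \<theta>)"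
    by (simp add: diff_divide_distrib add_divide_distrib)
  finally show ?thesis .
qed

lemma optimistic_step_Phi:
  fixes C :: "'a::{real_inner,complete_space} set" and u z g h :: 'a and \<theta> :: real
  assumes C: "C \<noteq> {}" "closed C" "convex C" and "z \<in> C" "0 < \<theta>"
  defines "x \<equiv> metric_proj C (u - \<theta> *\<^sub>R h)"
    and "u' \<equiv> metric_proj C (u - \<theta> *\<^sub>R g)"
    and "y \<equiv> metric_proj C (u - \<theta> *\<^sub>R yhat g h)"
  shows "inner g (x - z) \<le> (norm (u - z)^2 - norm (u' - z)^2) / (2 * \<theta>)
           + Phi (diam_e C) \<theta> g h / \<theta> - norm (y - u)^2 / (2 * \<theta>)"
proof -
  let ?m = "min_e (\<theta> * pos_part (norm (g - h) - norm g)) (diam_e C)"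
  have "x \<in> C" "y \<in> C" using metric_proj_in[OF C] by (simp_all add: x_def y_def)
  have "dist x y \<le> dist (u - \<theta> *\<^sub>R h) (u - \<theta> *\<^sub>R yhat g h)"
    unfolding x_def y_def by (rule metric_proj_nonexpansive[OF C])
  also have "\<dots> = \<theta> * pos_part (norm (g - h) - norm g)"
    using \<open>0 < \<theta>\<close> norm_diff_yhat_right[of h g]
    by (simp add: dist_norm norm_minus_commute algebra_simps flip: scaleR_diff_right)
  finally have "dist x y \<le> ?m"
    using min_e_ge dist_le_diam_e[OF \<open>x \<in> C\<close> \<open>y \<in> C\<close>] by blast
  hence "inner g (x - y) \<le> norm g * ?m"
    using norm_cauchy_schwarz[of g "x - y"] mult_left_mono[of "dist x y" ?m "norm g"]
    by (simp add: dist_norm)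
  moreover have "inner g (y - z) \<le> (norm (u - z)^2 - norm (u' - z)^2) / (2 * \<theta>)
      + Qstar (diam_e C) (\<theta> * norm (g - yhat g h)) / \<theta> - norm (y - u)^2 / (2 * \<theta>)"
    unfolding y_def u'_def by (rule optimistic_step_Qstar[OF C \<open>z \<in> C\<close> \<open>0 < \<theta>\<close>])
  moreover have "Phi (diam_e C) \<theta> g h / \<theta>
      = Qstar (diam_e C) (\<theta> * norm (g - yhat g h)) / \<theta> + norm g * ?m"
    using \<open>0 < \<theta>\<close> by (simp add: Phi_def norm_diff_yhat_left add_divide_distrib)
  moreover have "inner g (x - z) = inner g (y - z) + inner g (x - y)"
    by (simp add: inner_diff_right)
  ultimately show ?thesis by linarith
qed

lemma subdiff_real_diff_le:
  assumes "s \<in> subdiff f x" "z \<in> dom_subdiff f"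
  shows "real_of_ereal (f x) - real_of_ereal (f z) \<le> inner s (x - z)"
proof -
  obtain s' where "s' \<in> subdiff f z" using assms(2) by (auto simp: dom_subdiff_def)
  then obtain B where B: "f z = ereal B" by (cases "f z") (auto simp: subdiff_def)
  obtain A where A: "f x = ereal A" using assms(1) by (cases "f x") (auto simp: subdiff_def)
  have "f x + ereal (inner s (z - x)) \<le> f z" using assms(1) by (simp add: subdiff_def)
  hence "A + inner s (z - x) \<le> B" by (simp add: A B)
  thus ?thesis by (simp add: A B inner_diff_right)
qed

lemma weighted_telescoping_le:
  fixes D D' \<theta> :: "nat \<Rightarrow> real"
  assumes "1 \<le> n"
    and "\<And>t. t \<in> {1..<n} \<Longrightarrow> D' t = D (Suc t)"
    and "\<And>t. t \<in> {1..n} \<Longrightarrow> 0 < \<theta> t"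
    and "\<And>t. t \<in> {1..<n} \<Longrightarrow> \<theta> t \<le> \<theta> (Suc t)"
    and "\<And>t. 0 \<le> D' t"
  shows "(\<Sum>t=1..n. (D t - D' t) / (2 * \<theta> t)) \<le> D 1 / (2 * \<theta> 1) - D' n / (2 * \<theta> n)"
  using assms
proof (induction n rule: nat_induct_at_least)
  case base
  show ?case by (simp add: diff_divide_distrib)
next
  case (Suc n)
  have IH: "(\<Sum>t=1..n. (D t - D' t) / (2 * \<theta> t)) \<le> D 1 / (2 * \<theta> 1) - D' n / (2 * \<theta> n)"
    using Suc.prems by (intro Suc.IH) auto
  have "D' n = D (Suc n)" "0 < \<theta> n" "\<theta> n \<le> \<theta> (Suc n)"
    using Suc.prems(1-3) \<open>1 \<le> n\<close> by auto
  hence "D (Suc n) / (2 * \<theta> (Suc n)) \<le> D' n / (2 * \<theta> n)"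
    using Suc.prems(4)[of n] by (simp add: divide_left_mono)
  with IH show ?case by (simp add: diff_divide_distrib)
qed

theorem corollary8:
  fixes C :: "'a::{real_inner,complete_space} set"
    and a :: 'a and T :: nat and \<theta> :: "nat \<Rightarrow> real"
    and \<phi> :: "nat \<Rightarrow> 'a \<Rightarrow> ereal"
    and x xt xs xh :: "nat \<Rightarrow> 'a"
  assumes C: "C \<noteq> {}" "closed C" "convex C"
    and a: "a \<in> C"
    and T: "T \<ge> 1"
    and \<theta>_pos: "\<And>t. t \<in> {1..T} \<Longrightarrow> 0 < \<theta> t"
    and \<theta>_mono: "\<And>t. t \<in> {1..<T} \<Longrightarrow> \<theta> t \<le> \<theta> (Suc t)"
    and \<phi>: "\<And>t. t \<in> {1..T} \<Longrightarrow> proper_fun (\<phi> t) \<and> C \<subseteq> dom_subdiff (\<phi> t)"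
    and xt1: "xt 1 = a"
    and xt_rec: "\<And>t. t \<in> {2..T} \<Longrightarrow>
                   xt t = metric_proj C (xt (t - 1) - \<theta> (t - 1) *\<^sub>R xs (t - 1))"
    and x_def: "\<And>t. t \<in> {1..T} \<Longrightarrow> x t = metric_proj C (xt t - \<theta> t *\<^sub>R xh t)"
    and xs_sub: "\<And>t. t \<in> {1..T} \<Longrightarrow> xs t \<in> subdiff (\<phi> t) (x t)"
    and z: "z \<in> C"
  shows "(\<Sum>t=1..T. real_of_ereal (\<phi> t (x t))) - (\<Sum>t=1..T. real_of_ereal (\<phi> t z))
           \<le> (norm (z - a))\<^sup>2 / (2 * \<theta> 1)
             + (\<Sum>t=1..T. Qstar (diam_e C) (\<theta> t * norm (xs t - xh t)) / \<theta> t)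
             - (\<Sum>t=1..T. (norm (x t - xt t))\<^sup>2 / (2 * \<theta> t))
       \<and> (\<Sum>t=1..T. real_of_ereal (\<phi> t (x t))) - (\<Sum>t=1..T. real_of_ereal (\<phi> t z))
           \<le> (norm (z - a))\<^sup>2 / (2 * \<theta> 1)
             + (\<Sum>t=1..T. Phi (diam_e C) (\<theta> t) (xs t) (xh t) / \<theta> t)
             - (\<Sum>t=1..T. (norm (metric_proj C (xt t - \<theta> t *\<^sub>R yhat (xs t) (xh t)) - xt t))\<^sup>2
                          / (2 * \<theta> t))"
proof -
  define D where "D t = norm (xt t - z)^2" for t
  define D' where "D' t = norm (metric_proj C (xt t - \<theta> t *\<^sub>R xs t) - z)^2" for t
  have regret: "(\<Sum>t=1..T. real_of_ereal (\<phi> t (x t))) - (\<Sum>t=1..T. real_of_ereal (\<phi> t z))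
      \<le> (\<Sum>t=1..T. inner (xs t) (x t - z))"
    unfolding sum_subtractf[symmetric]
    using subdiff_real_diff_le xs_sub \<phi> z by (intro sum_mono) blast
  have "(\<Sum>t=1..T. (D t - D' t) / (2 * \<theta> t)) \<le> D 1 / (2 * \<theta> 1) - D' T / (2 * \<theta> T)"
    using T \<theta>_pos \<theta>_mono xt_rec by (intro weighted_telescoping_le) (auto simp: D_def D'_def)
  moreover have "0 \<le> D' T / (2 * \<theta> T)" using \<theta>_pos[of T] T by (simp add: D'_def)
  moreover have "D 1 / (2 * \<theta> 1) = (norm (z - a))\<^sup>2 / (2 * \<theta> 1)"
    using xt1 by (simp add: D_def norm_minus_commute)
  ultimately have telescope:
    "(\<Sum>t=1..T. (D t - D' t) / (2 * \<theta> t)) \<le> (norm (z - a))\<^sup>2 / (2 * \<theta> 1)"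
    by linarith
  have Qstar_rounds: "(\<Sum>t=1..T. inner (xs t) (x t - z)) \<le> (\<Sum>t=1..T. (D t - D' t) / (2 * \<theta> t))
      + (\<Sum>t=1..T. Qstar (diam_e C) (\<theta> t * norm (xs t - xh t)) / \<theta> t)
      - (\<Sum>t=1..T. (norm (x t - xt t))\<^sup>2 / (2 * \<theta> t))"
    unfolding sum.distrib[symmetric] sum_subtractf[symmetric] D_def D'_def
    using optimistic_step_Qstar[OF C z] \<theta>_pos x_def by (intro sum_mono) (simp add: diff_divide_distrib)
  have Phi_rounds: "(\<Sum>t=1..T. inner (xs t) (x t - z)) \<le> (\<Sum>t=1..T. (D t - D' t) / (2 * \<theta> t))
      + (\<Sum>t=1..T. Phi (diam_e C) (\<theta> t) (xs t) (xh t) / \<theta> t)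
      - (\<Sum>t=1..T. (norm (metric_proj C (xt t - \<theta> t *\<^sub>R yhat (xs t) (xh t)) - xt t))\<^sup>2
                   / (2 * \<theta> t))"
    unfolding sum.distrib[symmetric] sum_subtractf[symmetric] D_def D'_def
    using optimistic_step_Phi[OF C z] \<theta>_pos x_def by (intro sum_mono) (simp add: diff_divide_distrib)
  show ?thesis using regret telescope Qstar_rounds Phi_rounds by linarith
qed

end
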